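(* Let $S=(|S|,\preccurlyeq,E)$, where $|S|$ is a finite set, $\preccurlyeq$ is a partial ordering on $|S|$, and $E$ is a set of unordered pairs of distinct elements of $|S|$. Let $c$ be the number of connected components of the Hasse diagram of the poset $(|S|,\preccurlyeq)$. For each integer $n\ge 0$ let $C(S,n)$ be the number of maps $\varphi:|S|\to\{1,\dots,n\}$ that are isotone (i.e. $x\preccurlyeq y\Rightarrow \varphi(x)\le\varphi(y)$) and satisfy $\varphi(x)\neq\varphi(y)$ whenever $\{x,y\}\in E$. Then there is a polynomial $f\in\mathbb{Q}[t]$ with $C(S,n)=f(n)$ for all integers $n\ge 0$, and every prime dividing the denominator of a coefficient of $f$ (written in lowest terms) is $\le \mathrm{card}(|S|)-c+1$.
   Context: The Hasse diagram of a finite poset is the graph on its elements in which $x,y$ are adjacent iff one covers the other ($y$ covers $x$ means $x\preccurlyeq y$, $x\ne y$, and there is no $z$ distinct from both with $x\preccurlyeq z\preccurlyeq y$). *)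

theory Defs
  imports Main "HOL-Library.FuncSet" "HOL-Computational_Algebra.Polynomial"
    "HOL-Computational_Algebra.Primes"
begin

definition covers :: "'a set \<Rightarrow> ('a \<times> 'a) set \<Rightarrow> 'a \<Rightarrow> 'a \<Rightarrow> bool" where
  "covers S r x y \<longleftrightarrow> x \<in> S \<and> y \<in> S \<and> (x, y) \<in> r \<and> x \<noteq> y \<and>
     \<not> (\<exists>z\<in>S. z \<noteq> x \<and> z \<noteq> y \<and> (x, z) \<in> r \<and> (z, y) \<in> r)"

definition hasse_edges :: "'a set \<Rightarrow> ('a \<times> 'a) set \<Rightarrow> ('a \<times> 'a) set" where
  "hasse_edges S r = {(x, y). covers S r x y \<or> covers S r y x}"

definition hasse_components :: "'a set \<Rightarrow> ('a \<times> 'a) set \<Rightarrow> nat" where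
  "hasse_components S r = card (S // ((hasse_edges S r)\<^sup>*))"

definition colorings :: "'a set \<Rightarrow> ('a \<times> 'a) set \<Rightarrow> 'a set set \<Rightarrow> nat \<Rightarrow> nat" where
  "colorings S r E n = card {\<phi> \<in> S \<rightarrow>\<^sub>E {1..n}.
      (\<forall>x\<in>S. \<forall>y\<in>S. (x, y) \<in> r \<longrightarrow> \<phi> x \<le> \<phi> y) \<and>
      (\<forall>x y. {x, y} \<in> E \<longrightarrow> \<phi> x \<noteq> \<phi> y)}"

end

theory Submission
  imports Defs
begin

text \<open>
  Deletion--contraction on the pairs in \<open>E\<close> writes \<open>C(S,n)\<close> as a signed sum of numbers of
  isotone maps that are constant on prescribed pairs \<open>Q\<close>. Such a number factors over the
  connected components of the graph spanned by the order and by \<open>Q\<close>. On one component \<open>T\<close>,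
  grouping the maps by their image gives \<open>\<Sum>\<^sub>k m\<^sub>k (n choose k)\<close>, where \<open>m\<^sub>k\<close> counts the
  maps onto a \<open>k\<close>-element chain, so only the primes dividing \<open>k!\<close> for attainable image sizes
  \<open>k\<close> occur in denominators. Build \<open>T\<close> one Hasse component at a time: each new one is
  attached by a \<open>Q\<close>-edge, hence shares a value with the part already built, so
  \<open>|\<phi>(T)| + #(Hasse components meeting T) \<le> |T| + 1\<close>. As every Hasse component outside \<open>T\<close>
  has at least one element, \<open>|\<phi>(T)| \<le> |S| - c + 1\<close>.
\<close>

section \<open>Rationals with smooth denominators\<close>

text \<open>Equivalently, every prime factor of the denominator of \<open>q\<close> is at most \<open>B\<close>.\<close>

definition smooth_denom :: "nat \<Rightarrow> rat \<Rightarrow> bool" where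
  "smooth_denom B q \<longleftrightarrow> (\<exists>k z. q * fact B ^ k = of_int z)"

lemma smooth_denom_of_int [simp]: "smooth_denom B (of_int z)"
  unfolding smooth_denom_def by (rule exI[of _ 0]) auto

lemma smooth_denom_0 [simp]: "smooth_denom B 0"
  and smooth_denom_1 [simp]: "smooth_denom B 1"
  and smooth_denom_of_nat [simp]: "smooth_denom B (of_nat m)"
  using smooth_denom_of_int[of B 0] smooth_denom_of_int[of B 1] smooth_denom_of_int[of B "int m"]
  by simp_all

lemma smooth_denom_add:
  assumes "smooth_denom B a" "smooth_denom B b"
  shows "smooth_denom B (a + b)"
proof -
  from assms obtain k l y z where a: "a * fact B ^ k = of_int y" and b: "b * fact B ^ l = of_int z"
    unfolding smooth_denom_def by blast
  have "(a + b) * fact B ^ (k + l) = of_int (y * fact B ^ l + z * fact B ^ k)"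
    by (simp add: power_add algebra_simps flip: a b)
  then show ?thesis
    unfolding smooth_denom_def by blast
qed

lemma smooth_denom_mult:
  assumes "smooth_denom B a" "smooth_denom B b"
  shows "smooth_denom B (a * b)"
proof -
  from assms obtain k l y z where a: "a * fact B ^ k = of_int y" and b: "b * fact B ^ l = of_int z"
    unfolding smooth_denom_def by blast
  have "(a * b) * fact B ^ (k + l) = of_int (y * z)"
    by (simp add: power_add algebra_simps flip: a b)
  then show ?thesis
    unfolding smooth_denom_def by blast
qed

lemma smooth_denom_uminus: "smooth_denom B a \<Longrightarrow> smooth_denom B (- a)"
  using smooth_denom_mult[of B "-1" a] smooth_denom_of_int[of B "-1"] by simp

lemma smooth_denom_diff: "smooth_denom B a \<Longrightarrow> smooth_denom B b \<Longrightarrow> smooth_denom B (a - b)"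
  using smooth_denom_add[of B a "- b"] smooth_denom_uminus[of B b] by simp

lemma smooth_denom_sum: "(\<And>i. i \<in> A \<Longrightarrow> smooth_denom B (f i)) \<Longrightarrow> smooth_denom B (\<Sum>i\<in>A. f i)"
  by (induction A rule: infinite_finite_induct) (auto intro: smooth_denom_add)

lemma smooth_denom_inverse_fact:
  assumes "k \<le> B"
  shows "smooth_denom B (1 / fact k)"
proof -
  obtain m :: int where "fact B = fact k * m"
    using fact_dvd[OF assms] by blast
  then have "1 / fact k * fact B ^ 1 = (of_int m :: rat)"
    by (metis fact_nonzero nonzero_divide_eq_eq of_int_fact of_int_mult power_one_right times_divide_eq_left mult_1)
  then show ?thesis
    unfolding smooth_denom_def by blast
qed

lemma prime_dvd_denom_le:
  assumes "smooth_denom B q" "prime p" "int p dvd snd (quotient_of q)"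
  shows "p \<le> B"
proof -
  obtain a b where ab: "quotient_of q = (a, b)"
    by (cases "quotient_of q")
  have "b > 0" "coprime a b" "q = of_int a / of_int b"
    using ab quotient_of_denom_pos quotient_of_coprime quotient_of_div by blast+
  from assms(1) obtain k z where z: "q * fact B ^ k = of_int z"
    unfolding smooth_denom_def by blast
  have "of_int (a * fact B ^ k) = q * of_int b * fact B ^ k"
    using \<open>b > 0\<close> \<open>q = _\<close> by simp
  also have "\<dots> = of_int (z * b)"
    by (simp add: z mult.commute mult.left_commute)
  finally have "of_int (a * fact B ^ k) = (of_int (z * b) :: rat)" .
  then have "b dvd a * fact B ^ k"
    by (metis dvd_triv_right of_int_eq_iff)
  with \<open>coprime a b\<close> have "b dvd fact B ^ k"
    by (metis coprime_commute coprime_dvd_mult_right_iff)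
  with assms(3) ab have "int p dvd fact B ^ k"
    by (auto dest: dvd_trans)
  then have "p dvd fact B"
    by (metis assms(2) int_dvd_int_iff of_nat_fact of_nat_power prime_dvd_power)
  with assms(2) show ?thesis
    using prime_dvd_fact_iff by blast
qed

definition smooth_poly :: "nat \<Rightarrow> rat poly \<Rightarrow> bool" where
  "smooth_poly B f \<longleftrightarrow> (\<forall>i. smooth_denom B (coeff f i))"

lemma smooth_poly_0 [simp]: "smooth_poly B 0"
  by (simp add: smooth_poly_def)

lemma smooth_poly_pCons_iff [simp]: "smooth_poly B (pCons a f) \<longleftrightarrow> smooth_denom B a \<and> smooth_poly B f"
  unfolding smooth_poly_def by (metis coeff_pCons_0 coeff_pCons_Suc not0_implies_Suc)

lemma smooth_poly_1 [simp]: "smooth_poly B 1"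
  by (simp add: one_pCons)

lemma smooth_poly_diff: "smooth_poly B f \<Longrightarrow> smooth_poly B g \<Longrightarrow> smooth_poly B (f - g)"
  unfolding smooth_poly_def by (simp add: smooth_denom_diff)

lemma smooth_poly_smult: "smooth_denom B c \<Longrightarrow> smooth_poly B f \<Longrightarrow> smooth_poly B (smult c f)"
  unfolding smooth_poly_def by (simp add: smooth_denom_mult)

lemma smooth_poly_sum: "(\<And>i. i \<in> A \<Longrightarrow> smooth_poly B (f i)) \<Longrightarrow> smooth_poly B (\<Sum>i\<in>A. f i)"
  unfolding smooth_poly_def coeff_sum by (auto intro: smooth_denom_sum)

lemma smooth_poly_mult: "smooth_poly B f \<Longrightarrow> smooth_poly B g \<Longrightarrow> smooth_poly B (f * g)"
  unfolding smooth_poly_def coeff_mult by (auto intro!: smooth_denom_sum smooth_denom_mult)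

lemma smooth_poly_prod: "(\<And>i. i \<in> A \<Longrightarrow> smooth_poly B (f i)) \<Longrightarrow> smooth_poly B (\<Prod>i\<in>A. f i)"
  by (induction A rule: infinite_finite_induct) (auto intro: smooth_poly_mult)

definition binomial_poly :: "nat \<Rightarrow> rat poly" where
  "binomial_poly k = smult (1 / fact k) (\<Prod>i<k. [:- of_nat i, 1:])"

lemma poly_binomial_poly: "poly (binomial_poly k) (of_nat n) = of_nat (n choose k)"
  unfolding binomial_poly_def binomial_gbinomial gbinomial_prod_rev
  by (simp add: poly_prod divide_inverse mult.commute atLeast0LessThan)

lemma smooth_poly_binomial_poly: "k \<le> B \<Longrightarrow> smooth_poly B (binomial_poly k)"
  unfolding binomial_poly_def
  by (intro smooth_poly_smult smooth_denom_inverse_fact smooth_poly_prod)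
     (simp_all add: smooth_denom_uminus)

definition smooth_poly_fun :: "nat \<Rightarrow> (nat \<Rightarrow> nat) \<Rightarrow> bool" where
  "smooth_poly_fun B g \<longleftrightarrow> (\<exists>f. smooth_poly B f \<and> (\<forall>n. poly f (of_nat n) = of_nat (g n)))"

lemma smooth_poly_fun_1: "smooth_poly_fun B (\<lambda>_. 1)"
  unfolding smooth_poly_fun_def by (rule exI[of _ 1]) simp

lemma smooth_poly_fun_mult:
  assumes "smooth_poly_fun B g" "smooth_poly_fun B h"
  shows "smooth_poly_fun B (\<lambda>n. g n * h n)"
proof -
  from assms obtain f1 f2 where "smooth_poly B f1" "\<forall>n. poly f1 (of_nat n) = of_nat (g n)"
    "smooth_poly B f2" "\<forall>n. poly f2 (of_nat n) = of_nat (h n)"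
    unfolding smooth_poly_fun_def by blast
  then show ?thesis
    unfolding smooth_poly_fun_def by (intro exI[of _ "f1 * f2"]) (simp add: smooth_poly_mult)
qed

lemma smooth_poly_fun_diff:
  assumes "smooth_poly_fun B g" "smooth_poly_fun B h" "\<And>n. g n = k n + h n"
  shows "smooth_poly_fun B k"
proof -
  from assms obtain f1 f2 where "smooth_poly B f1" "\<forall>n. poly f1 (of_nat n) = of_nat (g n)"
    "smooth_poly B f2" "\<forall>n. poly f2 (of_nat n) = of_nat (h n)"
    unfolding smooth_poly_fun_def by blast
  with assms(3) show ?thesis
    unfolding smooth_poly_fun_def by (intro exI[of _ "f1 - f2"]) (simp add: smooth_poly_diff)
qed

section \<open>Counting maps by their order type\<close>

definition order_invariant :: "'a set \<Rightarrow> (('a \<Rightarrow> nat) \<Rightarrow> bool) \<Rightarrow> bool" where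
  "order_invariant T P \<longleftrightarrow>
     (\<forall>\<phi> \<psi>. (\<forall>x\<in>T. \<forall>y\<in>T. \<phi> x \<le> \<phi> y \<longleftrightarrow> \<psi> x \<le> \<psi> y) \<longrightarrow> P \<phi> = P \<psi>)"

definition maps_onto :: "'a set \<Rightarrow> (('a \<Rightarrow> nat) \<Rightarrow> bool) \<Rightarrow> nat set \<Rightarrow> ('a \<Rightarrow> nat) set" where
  "maps_onto T P A = {\<phi> \<in> T \<rightarrow>\<^sub>E A. P \<phi> \<and> \<phi> ` T = A}"

lemma restrict_comp_in_maps_onto:
  assumes "order_invariant T P" "h ` X = Y" "\<forall>a\<in>X. \<forall>b\<in>X. h a \<le> h b \<longleftrightarrow> a \<le> b"
    and "\<phi> \<in> maps_onto T P X"
  shows "restrict (h \<circ> \<phi>) T \<in> maps_onto T P Y"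
proof -
  have "\<phi> ` T \<subseteq> X"
    using assms(4) unfolding maps_onto_def by auto
  with assms(3) have "\<forall>x\<in>T. \<forall>y\<in>T. restrict (h \<circ> \<phi>) T x \<le> restrict (h \<circ> \<phi>) T y \<longleftrightarrow> \<phi> x \<le> \<phi> y"
    by auto
  with assms(1) have "P (restrict (h \<circ> \<phi>) T) = P \<phi>"
    unfolding order_invariant_def by blast
  with assms(2,4) show ?thesis
    unfolding maps_onto_def by (auto simp: image_comp)
qed

lemma card_maps_onto_order_iso:
  assumes P: "order_invariant T P" and h: "bij_betw h X Y"
    and mono: "\<forall>a\<in>X. \<forall>b\<in>X. h a \<le> h b \<longleftrightarrow> a \<le> b"
  shows "card (maps_onto T P X) = card (maps_onto T P Y)"
proof -
  define g where "g = inv_into X h"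
  have g: "bij_betw g Y X"
    unfolding g_def using h by (rule bij_betw_inv_into)
  have hg: "h (g y) = y" if "y \<in> Y" for y
    using that h unfolding g_def by (meson bij_betw_inv_into_right)
  have gh: "g (h x) = x" if "x \<in> X" for x
    using that h unfolding g_def by (meson bij_betw_inv_into_left)
  have mono_g: "\<forall>a\<in>Y. \<forall>b\<in>Y. g a \<le> g b \<longleftrightarrow> a \<le> b"
    using mono hg g by (metis bij_betwE)
  have "bij_betw (\<lambda>\<phi>. restrict (h \<circ> \<phi>) T) (maps_onto T P X) (maps_onto T P Y)"
  proof (rule bij_betw_byWitness[where f' = "\<lambda>\<phi>. restrict (g \<circ> \<phi>) T"])
    show "\<forall>\<phi>\<in>maps_onto T P X. restrict (g \<circ> restrict (h \<circ> \<phi>) T) T = \<phi>"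
      using gh by (auto simp: maps_onto_def PiE_iff extensional_def fun_eq_iff)
    show "\<forall>\<phi>\<in>maps_onto T P Y. restrict (h \<circ> restrict (g \<circ> \<phi>) T) T = \<phi>"
      using hg by (auto simp: maps_onto_def PiE_iff extensional_def fun_eq_iff)
    show "(\<lambda>\<phi>. restrict (h \<circ> \<phi>) T) ` maps_onto T P X \<subseteq> maps_onto T P Y"
      using restrict_comp_in_maps_onto[OF P _ mono] h by (auto simp: bij_betw_def)
    show "(\<lambda>\<phi>. restrict (g \<circ> \<phi>) T) ` maps_onto T P Y \<subseteq> maps_onto T P X"
      using restrict_comp_in_maps_onto[OF P _ mono_g] g by (auto simp: bij_betw_def)
  qed
  then show ?thesis
    by (rule bij_betw_same_card)
qed

lemma ex_order_iso_atLeastLessThan: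
  fixes A :: "nat set"
  assumes "finite A"
  shows "\<exists>h. bij_betw h {0..<card A} A \<and> (\<forall>a\<in>{0..<card A}. \<forall>b\<in>{0..<card A}. h a \<le> h b \<longleftrightarrow> a \<le> b)"
proof -
  define xs where "xs = sorted_list_of_set A"
  have xs: "distinct xs" "set xs = A" "length xs = card A" "sorted_wrt (<) xs"
    using assms by (simp_all add: xs_def)
  have "bij_betw ((!) xs) {0..<card A} A"
    using xs by (intro bij_betw_nth) (simp_all add: atLeast0LessThan)
  moreover have "xs ! a \<le> xs ! b \<longleftrightarrow> a \<le> b" if "a < card A" "b < card A" for a b
    using sorted_wrt_nth_less[OF xs(4), of a b] sorted_wrt_nth_less[OF xs(4), of b a] that xs(3)
    by (cases a b rule: linorder_cases) auto
  ultimately show ?thesis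
    by auto
qed

lemma card_maps_onto_eq_atLeastLessThan:
  assumes P: "order_invariant T P" and "finite A"
  shows "card (maps_onto T P A) = card (maps_onto T P {0..<card A})"
proof -
  obtain h where "bij_betw h {0..<card A} A" "\<forall>a\<in>{0..<card A}. \<forall>b\<in>{0..<card A}. h a \<le> h b \<longleftrightarrow> a \<le> b"
    using ex_order_iso_atLeastLessThan[OF \<open>finite A\<close>] by blast
  from card_maps_onto_order_iso[OF P this] show ?thesis
    by simp
qed

lemma card_maps_eq_sum_maps_onto:
  assumes "finite T"
  shows "card {\<phi> \<in> T \<rightarrow>\<^sub>E {1..n}. P \<phi>} = (\<Sum>A\<in>Pow {1..n}. card (maps_onto T P A))"
proof -
  have "{\<phi> \<in> T \<rightarrow>\<^sub>E {1..n}. P \<phi>} = (\<Union>A\<in>Pow {1..n}. maps_onto T P A)"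
    unfolding maps_onto_def by (auto simp: PiE_iff)
  moreover have "finite (maps_onto T P A)" if "A \<subseteq> {1..n}" for A
    unfolding maps_onto_def
    by (rule finite_subset[OF _ finite_PiE[of T "\<lambda>_. A"]])
       (use assms that finite_subset[of A "{1..n}"] in auto)
  moreover have "maps_onto T P A \<inter> maps_onto T P A' = {}" if "A \<noteq> A'" for A A'
    using that unfolding maps_onto_def by blast
  ultimately show ?thesis
    by (simp add: card_UN_disjoint)
qed

lemma sum_Pow_card:
  fixes g :: "nat \<Rightarrow> 'b::comm_semiring_1"
  assumes "finite X"
  shows "(\<Sum>A\<in>Pow X. g (card A)) = (\<Sum>k\<le>card X. of_nat (card X choose k) * g k)"
proof -
  have "card ` Pow X \<subseteq> {..card X}"
    using assms by (auto intro: card_mono)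
  then have "(\<Sum>A\<in>Pow X. g (card A)) = (\<Sum>k\<le>card X. \<Sum>A\<in>{A \<in> Pow X. card A = k}. g (card A))"
    using assms by (intro sum.group[symmetric]) auto
  also have "\<dots> = (\<Sum>k\<le>card X. of_nat (card X choose k) * g k)"
    using assms by (intro sum.cong refl) (simp add: n_subsets Pow_def conj_commute)
  finally show ?thesis .
qed

lemma smooth_poly_fun_card_order_invariant:
  assumes "finite T" and P: "order_invariant T P" and bound: "\<And>\<phi>. P \<phi> \<Longrightarrow> card (\<phi> ` T) \<le> B"
  shows "smooth_poly_fun B (\<lambda>n. card {\<phi> \<in> T \<rightarrow>\<^sub>E {1..n}. P \<phi>})"
proof -
  \<comment> \<open>An order isomorphism carries the maps onto the chain \<open>{0..<k}\<close> to those onto any \<open>k\<close>-set.\<close>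
  define m where "m k = card (maps_onto T P {0..<k})" for k
  have m_eq_0: "m k = 0" if "k > B" for k
  proof -
    have "maps_onto T P {0..<k} = {}"
      using bound[of _] that unfolding maps_onto_def by force
    then show ?thesis
      by (simp add: m_def)
  qed
  have "card {\<phi> \<in> T \<rightarrow>\<^sub>E {1..n}. P \<phi>} = (\<Sum>k\<le>B. (n choose k) * m k)" for n
  proof -
    have "card {\<phi> \<in> T \<rightarrow>\<^sub>E {1..n}. P \<phi>} = (\<Sum>A\<in>Pow {1..n}. m (card A))"
      unfolding card_maps_eq_sum_maps_onto[OF \<open>finite T\<close>] m_def
      by (intro sum.cong refl card_maps_onto_eq_atLeastLessThan[OF P])
         (meson PowD finite_atLeastAtMost finite_subset)
    also have "\<dots> = (\<Sum>k\<le>n. (n choose k) * m k)"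
      by (simp add: sum_Pow_card)
    also have "\<dots> = (\<Sum>k\<le>max n B. (n choose k) * m k)"
      by (rule sum.mono_neutral_left) auto
    also have "\<dots> = (\<Sum>k\<le>B. (n choose k) * m k)"
      by (rule sum.mono_neutral_right) (auto simp: m_eq_0 binomial_eq_0)
    finally show ?thesis .
  qed
  moreover have "smooth_poly B (\<Sum>k\<le>B. smult (of_nat (m k)) (binomial_poly k))"
    by (auto intro!: smooth_poly_sum smooth_poly_smult smooth_poly_binomial_poly)
  ultimately show ?thesis
    unfolding smooth_poly_fun_def
    by (intro exI[of _ "\<Sum>k\<le>B. smult (of_nat (m k)) (binomial_poly k)"])
       (simp add: poly_sum poly_binomial_poly mult.commute)
qed

section \<open>Deletion--contraction and factorisation over components\<close>

text \<open>\<open>Q\<close> collects the contracted pairs and \<open>D\<close> the pairs still to be separated.\<close>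

definition admissible ::
    "('a \<times> 'a) set \<Rightarrow> ('a \<times> 'a) set \<Rightarrow> ('a \<times> 'a) set \<Rightarrow> 'a set \<Rightarrow> ('a \<Rightarrow> nat) \<Rightarrow> bool" where
  "admissible r Q D U \<phi> \<longleftrightarrow> (\<forall>x\<in>U. \<forall>y\<in>U.
     ((x, y) \<in> r \<longrightarrow> \<phi> x \<le> \<phi> y) \<and> ((x, y) \<in> Q \<longrightarrow> \<phi> x = \<phi> y) \<and> ((x, y) \<in> D \<longrightarrow> \<phi> x \<noteq> \<phi> y))"

definition num_admissible ::
    "('a \<times> 'a) set \<Rightarrow> ('a \<times> 'a) set \<Rightarrow> ('a \<times> 'a) set \<Rightarrow> 'a set \<Rightarrow> nat \<Rightarrow> nat" where
  "num_admissible r Q D U n = card {\<phi> \<in> U \<rightarrow>\<^sub>E {1..n}. admissible r Q D U \<phi>}"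

lemma order_invariant_admissible: "order_invariant U (admissible r Q D U)"
  unfolding order_invariant_def
proof (intro allI impI)
  fix \<phi> \<psi> :: "'a \<Rightarrow> nat"
  assume le: "\<forall>x\<in>U. \<forall>y\<in>U. \<phi> x \<le> \<phi> y \<longleftrightarrow> \<psi> x \<le> \<psi> y"
  then have eq: "\<forall>x\<in>U. \<forall>y\<in>U. \<phi> x = \<phi> y \<longleftrightarrow> \<psi> x = \<psi> y"
    by (simp add: order.eq_iff)
  show "admissible r Q D U \<phi> = admissible r Q D U \<psi>"
    unfolding admissible_def using le eq by (intro ball_cong refl) auto
qed

lemma admissible_restrict: "admissible r Q D U (restrict \<phi> U) \<longleftrightarrow> admissible r Q D U \<phi>"
  unfolding admissible_def by simp

lemma num_admissible_Un:
  assumes disj: "T \<inter> V = {}"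
    and apart: "\<forall>x\<in>T. \<forall>y\<in>V. (x, y) \<notin> r \<union> Q \<union> D \<and> (y, x) \<notin> r \<union> Q \<union> D"
  shows "num_admissible r Q D (T \<union> V) n = num_admissible r Q D T n * num_admissible r Q D V n"
proof -
  define adm where "adm U = {\<phi> \<in> U \<rightarrow>\<^sub>E {1..n}. admissible r Q D U \<phi>}" for U
  have adm_Un: "admissible r Q D (T \<union> V) \<phi> \<longleftrightarrow> admissible r Q D T \<phi> \<and> admissible r Q D V \<phi>" for \<phi>
    using apart unfolding admissible_def by blast
  define glue :: "('a \<Rightarrow> nat) \<times> ('a \<Rightarrow> nat) \<Rightarrow> 'a \<Rightarrow> nat"
    where "glue = (\<lambda>(\<phi>, \<psi>) z. if z \<in> T then \<phi> z else \<psi> z)"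
  have "bij_betw (\<lambda>\<phi>. (restrict \<phi> T, restrict \<phi> V)) (adm (T \<union> V)) (adm T \<times> adm V)"
  proof (rule bij_betw_byWitness[where f' = glue])
    show "\<forall>\<phi>\<in>adm (T \<union> V). glue (restrict \<phi> T, restrict \<phi> V) = \<phi>"
      unfolding adm_def glue_def by (auto simp: fun_eq_iff PiE_def extensional_def)
    show "\<forall>p\<in>adm T \<times> adm V. (restrict (glue p) T, restrict (glue p) V) = p"
      unfolding adm_def glue_def using disj by (fastforce simp: fun_eq_iff PiE_def extensional_def)
    show "(\<lambda>\<phi>. (restrict \<phi> T, restrict \<phi> V)) ` adm (T \<union> V) \<subseteq> adm T \<times> adm V"
      unfolding adm_def using adm_Un by (auto simp: admissible_restrict)
    show "glue ` (adm T \<times> adm V) \<subseteq> adm (T \<union> V)"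
    proof (rule image_subsetI)
      fix p assume "p \<in> adm T \<times> adm V"
      then obtain \<phi> \<psi> where p: "p = (\<phi>, \<psi>)" "\<phi> \<in> adm T" "\<psi> \<in> adm V"
        by blast
      have "glue p \<in> (T \<union> V) \<rightarrow>\<^sub>E {1..n}"
        using p disj unfolding adm_def glue_def by (fastforce simp: PiE_def extensional_def Pi_def)
      moreover have "admissible r Q D T (glue p)" "admissible r Q D V (glue p)"
        using p disj unfolding adm_def glue_def admissible_def by auto
      ultimately show "glue p \<in> adm (T \<union> V)"
        unfolding adm_def using adm_Un by blast
    qed
  qed
  then show ?thesis
    unfolding num_admissible_def adm_def[symmetric] by (simp add: bij_betw_same_card card_cartesian_product)
qed

lemma num_admissible_delete_contract:
  assumes "finite U" "a \<in> U" "b \<in> U"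
  shows "num_admissible r Q D U n
    = num_admissible r Q (insert (a, b) D) U n + num_admissible r (insert (a, b) Q) D U n"
proof -
  define X where "X = {\<phi> \<in> U \<rightarrow>\<^sub>E {1..n}. admissible r Q D U \<phi>}"
  have "finite X"
    unfolding X_def by (rule finite_subset[OF _ finite_PiE[of U "\<lambda>_. {1..n}"]]) (use assms(1) in auto)
  then have "card X = card {\<phi>\<in>X. \<phi> a \<noteq> \<phi> b} + card {\<phi>\<in>X. \<phi> a = \<phi> b}"
    by (subst card_Un_disjoint[symmetric]) (auto intro: arg_cong[where f = card])
  moreover have "{\<phi>\<in>X. \<phi> a \<noteq> \<phi> b} = {\<phi> \<in> U \<rightarrow>\<^sub>E {1..n}. admissible r Q (insert (a, b) D) U \<phi>}"
    "{\<phi>\<in>X. \<phi> a = \<phi> b} = {\<phi> \<in> U \<rightarrow>\<^sub>E {1..n}. admissible r (insert (a, b) Q) D U \<phi>}"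
    unfolding X_def admissible_def using assms(2,3) by blast+
  ultimately show ?thesis
    unfolding num_admissible_def X_def by simp
qed

definition constraint_component :: "('a \<times> 'a) set \<Rightarrow> ('a \<times> 'a) set \<Rightarrow> 'a \<Rightarrow> 'a set" where
  "constraint_component r Q x = (r \<union> r\<inverse> \<union> Q \<union> Q\<inverse>)\<^sup>* `` {x}"

lemma constraint_component_closed:
  "a \<in> constraint_component r Q x \<Longrightarrow> (a, b) \<in> r \<union> r\<inverse> \<union> Q \<union> Q\<inverse> \<Longrightarrow> b \<in> constraint_component r Q x"
  unfolding constraint_component_def by (auto intro: rtrancl_into_rtrancl)

lemma constraint_component_subset:
  assumes "(r \<union> r\<inverse> \<union> Q \<union> Q\<inverse>) `` U \<subseteq> U" "x \<in> U"
  shows "constraint_component r Q x \<subseteq> U"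
proof -
  have "(r \<union> r\<inverse> \<union> Q \<union> Q\<inverse>)\<^sup>* `` U = U"
    using assms(1) by (rule Image_closed_trancl)
  with assms(2) show ?thesis
    unfolding constraint_component_def by blast
qed

lemma smooth_poly_fun_num_admissible_if_components_bounded:
  assumes "finite U" and closed: "(r \<union> r\<inverse> \<union> Q \<union> Q\<inverse>) `` U \<subseteq> U"
    and bound: "\<And>x \<phi>. x \<in> U \<Longrightarrow> admissible r Q {} (constraint_component r Q x) \<phi> \<Longrightarrow>
        card (\<phi> ` constraint_component r Q x) \<le> B"
  shows "smooth_poly_fun B (num_admissible r Q {} U)"
  using assms
proof (induction "card U" arbitrary: U rule: less_induct)
  case less
  show ?case
  proof (cases "U = {}")
    case True
    then have "num_admissible r Q {} U = (\<lambda>_. 1)"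
      by (intro ext) (simp add: num_admissible_def admissible_def PiE_empty_domain)
    then show ?thesis
      using smooth_poly_fun_1 by metis
  next
    case False
    then obtain x where "x \<in> U"
      by blast
    define T where "T = constraint_component r Q x"
    have "T \<subseteq> U" "finite T"
      using constraint_component_subset[OF less.prems(2) \<open>x \<in> U\<close>] \<open>finite U\<close>
      by (auto simp: T_def dest: finite_subset)
    have T_closed: "b \<in> T" if "a \<in> T" "(a, b) \<in> r \<union> Q \<or> (b, a) \<in> r \<union> Q" for a b
      using that constraint_component_closed[of a r Q x b] unfolding T_def by blast
    then have apart: "\<forall>a\<in>T. \<forall>b\<in>U - T. (a, b) \<notin> r \<union> Q \<union> {} \<and> (b, a) \<notin> r \<union> Q \<union> {}"
      by blast
    have "(r \<union> r\<inverse> \<union> Q \<union> Q\<inverse>) `` (U - T) \<subseteq> U - T"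
      using less.prems(2) T_closed by blast
    moreover have "card (U - T) < card U"
      using \<open>x \<in> U\<close> \<open>finite U\<close> by (intro psubset_card_mono) (auto simp: T_def constraint_component_def)
    ultimately have "smooth_poly_fun B (num_admissible r Q {} (U - T))"
      by (intro less.hyps) (use less.prems in auto)
    moreover have "smooth_poly_fun B (num_admissible r Q {} T)"
      unfolding num_admissible_def
      using \<open>finite T\<close> order_invariant_admissible less.prems(3)[OF \<open>x \<in> U\<close>, folded T_def]
      by (rule smooth_poly_fun_card_order_invariant)
    moreover have "num_admissible r Q {} U n = num_admissible r Q {} T n * num_admissible r Q {} (U - T) n" for n
      using num_admissible_Un[OF _ apart] \<open>T \<subseteq> U\<close> by (simp add: Un_absorb1)
    ultimately show ?thesis
      using smooth_poly_fun_mult by presburger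
  qed
qed

lemma smooth_poly_fun_num_admissible_delete_contract:
  assumes "finite U" and "D \<subseteq> U \<times> U" "Q \<subseteq> U \<times> U"
    and no_separations: "\<And>Q. Q \<subseteq> U \<times> U \<Longrightarrow> smooth_poly_fun B (num_admissible r Q {} U)"
  shows "smooth_poly_fun B (num_admissible r Q D U)"
proof -
  have "finite D"
    using assms(1,2) by (meson finite_SigmaI finite_subset)
  from this assms(2,3) show ?thesis
  proof (induction D arbitrary: Q rule: finite_induct)
    case empty
    show ?case
      by (rule no_separations) (use empty.prems in auto)
  next
    case (insert e D)
    obtain a b where e: "e = (a, b)" "a \<in> U" "b \<in> U"
      using insert.prems by (cases e) auto
    show ?case
    proof (rule smooth_poly_fun_diff)
      show "smooth_poly_fun B (num_admissible r Q D U)"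
        using insert.IH[of Q] insert.prems by simp
      show "smooth_poly_fun B (num_admissible r (insert e Q) D U)"
        using insert.IH[of "insert e Q"] insert.prems e by simp
      show "num_admissible r Q D U n = num_admissible r Q (insert e D) U n + num_admissible r (insert e Q) D U n" for n
        unfolding e(1) by (rule num_admissible_delete_contract[OF \<open>finite U\<close> e(2,3)])
    qed
  qed
qed

section \<open>Image sizes on components\<close>

lemma quotient_eq_image: "X // R = (\<lambda>x. R `` {x}) ` X"
  by (auto simp: quotient_def)

lemma equiv_rtrancl: "sym A \<Longrightarrow> equiv UNIV (A\<^sup>*)"
  by (simp add: equivI refl_rtrancl sym_rtrancl trans_rtrancl)

lemma quotient_rtrancl_class:
  assumes "sym A"
  shows "(A\<^sup>* `` {y}) // A\<^sup>* = {A\<^sup>* `` {y}}"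
proof -
  have "A\<^sup>* `` {z} = A\<^sup>* `` {y}" if "z \<in> A\<^sup>* `` {y}" for z
    using equiv_class_eq[OF equiv_rtrancl[OF assms]] that by auto
  then show ?thesis
    unfolding quotient_eq_image by blast
qed

lemma card_image_add_card_quotient_Un_class:
  assumes "sym A" "finite U" "finite (A\<^sup>* `` {y})" "A `` U \<subseteq> U" "y \<notin> U" "\<phi> y \<in> \<phi> ` U"
  shows "card (\<phi> ` (U \<union> A\<^sup>* `` {y})) + card ((U \<union> A\<^sup>* `` {y}) // A\<^sup>*) + card U
    \<le> card (\<phi> ` U) + card (U // A\<^sup>*) + card (U \<union> A\<^sup>* `` {y})"
proof -
  define C where "C = A\<^sup>* `` {y}"
  have U_closed: "A\<^sup>* `` U = U"
    using assms(4) by (rule Image_closed_trancl)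
  have "y \<in> C"
    by (simp add: C_def)
  have "U \<inter> C = {}"
    using U_closed assms(5) sym_rtrancl[OF assms(1)] unfolding C_def by (auto dest: symD)
  then have card_U_C: "card (U \<union> C) = card U + card C"
    using assms(2,3) by (simp add: C_def card_Un_disjoint)
  have "C \<notin> U // A\<^sup>*"
    using U_closed assms(5) \<open>y \<in> C\<close> unfolding quotient_eq_image by blast
  moreover have "(U \<union> C) // A\<^sup>* = U // A\<^sup>* \<union> C // A\<^sup>*"
    by (simp add: quotient_eq_image image_Un)
  then have "(U \<union> C) // A\<^sup>* = insert C (U // A\<^sup>*)"
    using quotient_rtrancl_class[OF assms(1), of y] by (simp add: C_def)
  ultimately have card_quotient: "card ((U \<union> C) // A\<^sup>*) = card (U // A\<^sup>*) + 1"
    using assms(2) by (simp add: quotient_eq_image)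
  have "\<phi> y \<in> \<phi> ` U \<inter> \<phi> ` C"
    using assms(6) \<open>y \<in> C\<close> by blast
  then have "card (\<phi> ` U \<inter> \<phi> ` C) \<ge> 1"
    using assms(2,3) by (metis C_def One_nat_def Suc_leI card_gt_0_iff empty_iff finite_Int finite_imageI)
  then have "card (\<phi> ` (U \<union> C)) + 1 \<le> card (\<phi> ` U) + card (\<phi> ` C)"
    using card_Un_Int[of "\<phi> ` U" "\<phi> ` C"] assms(2,3) by (simp add: C_def image_Un)
  moreover have "card (\<phi> ` C) \<le> card C"
    using assms(3) by (simp add: C_def card_image_le)
  ultimately show ?thesis
    using card_U_C card_quotient by (simp add: C_def)
qed

lemma rtrancl_Image_subset_component:
  "y \<in> (A \<union> Q)\<^sup>* `` {x} \<Longrightarrow> A\<^sup>* `` {y} \<subseteq> (A \<union> Q)\<^sup>* `` {x}"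
  using rtrancl_mono[of A "A \<union> Q"] by (auto intro: rtrancl_trans)

lemma card_image_add_card_quotient_le_grow:
  assumes "sym A" and T: "T = (A \<union> Q \<union> Q\<inverse>)\<^sup>* `` {x}" and "finite T"
    and \<phi>: "\<And>a b. (a, b) \<in> Q \<Longrightarrow> a \<in> T \<Longrightarrow> \<phi> a = \<phi> b"
    and "U \<subseteq> T" "x \<in> U" "A `` U \<subseteq> U" "card (\<phi> ` U) + card (U // A\<^sup>*) \<le> card U + 1"
  shows "card (\<phi> ` T) + card (T // A\<^sup>*) \<le> card T + 1"
  using assms(5-8)
  \<comment> \<open>\<open>U\<close> grows by a whole \<open>A\<close>-class across a \<open>Q\<close>-edge, which adds one class and shares a value.\<close>
proof (induction "card (T - U)" arbitrary: U rule: less_induct)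
  case less
  define G where "G = A \<union> Q \<union> Q\<inverse>"
  show ?case
  proof (cases "G `` U \<subseteq> U")
    case True
    then have "T \<subseteq> U"
      using Image_closed_trancl[OF True] less.prems(2) T by (auto simp: G_def)
    with less.prems show ?thesis
      by (metis subset_antisym)
  next
    case False
    then obtain u y where uy: "u \<in> U" "(u, y) \<in> G" "y \<notin> U"
      by blast
    have "y \<in> T"
      using T uy less.prems(1) by (auto simp: G_def intro: rtrancl_into_rtrancl)
    have "(u, y) \<notin> A"
      using less.prems(3) uy by blast
    with uy(2) have "(u, y) \<in> Q \<or> (y, u) \<in> Q"
      by (auto simp: G_def)
    then have "\<phi> y = \<phi> u"
      using \<phi> less.prems(1) uy(1) \<open>y \<in> T\<close> by (metis subsetD)
    then have "\<phi> y \<in> \<phi> ` U"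
      using uy(1) by simp
    define U' where "U' = U \<union> A\<^sup>* `` {y}"
    have y_class: "A\<^sup>* `` {y} \<subseteq> T"
      using rtrancl_Image_subset_component[of y A "Q \<union> Q\<inverse>" x] \<open>y \<in> T\<close> T by (simp add: Un_assoc)
    have finite: "finite U" "finite (A\<^sup>* `` {y})"
      using less.prems(1) y_class \<open>finite T\<close> by (auto dest: finite_subset)
    have "U' \<subseteq> T"
      using less.prems(1) y_class by (simp add: U'_def)
    moreover have "A `` U' \<subseteq> U'"
      using less.prems(3) by (auto simp: U'_def intro: rtrancl_into_rtrancl)
    moreover have "card (\<phi> ` U') + card (U' // A\<^sup>*) \<le> card U' + 1"
      using card_image_add_card_quotient_Un_class[OF assms(1) finite less.prems(3) uy(3) \<open>\<phi> y \<in> \<phi> ` U\<close>]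
        less.prems(4) by (simp add: U'_def)
    moreover have "card (T - U') < card (T - U)"
      using \<open>finite T\<close> \<open>y \<in> T\<close> uy(3) by (intro psubset_card_mono) (auto simp: U'_def)
    ultimately show ?thesis
      using less.hyps less.prems(2) by (auto simp: U'_def)
  qed
qed

lemma card_image_add_card_quotient_le:
  assumes "sym A" and T: "T = (A \<union> Q \<union> Q\<inverse>)\<^sup>* `` {x}" and "finite T"
    and \<phi>: "\<And>a b. (a, b) \<in> Q \<Longrightarrow> a \<in> T \<Longrightarrow> \<phi> a = \<phi> b"
  shows "card (\<phi> ` T) + card (T // A\<^sup>*) \<le> card T + 1"
proof (rule card_image_add_card_quotient_le_grow[OF assms])
  show "A\<^sup>* `` {x} \<subseteq> T"
    using rtrancl_Image_subset_component[of x A "Q \<union> Q\<inverse>" x] T by (simp add: Un_assoc)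
  show "A `` (A\<^sup>* `` {x}) \<subseteq> A\<^sup>* `` {x}"
    by (auto intro: rtrancl_into_rtrancl)
  have "finite (A\<^sup>* `` {x})"
    using \<open>finite T\<close> \<open>A\<^sup>* `` {x} \<subseteq> T\<close> by (rule finite_subset[rotated])
  then show "card (\<phi> ` A\<^sup>* `` {x}) + card (A\<^sup>* `` {x} // A\<^sup>*) \<le> card (A\<^sup>* `` {x}) + 1"
    by (simp add: quotient_rtrancl_class[OF assms(1)] card_image_le)
  show "x \<in> A\<^sup>* `` {x}"
    by simp
qed

lemma card_image_component_le:
  assumes "sym A" "finite S" "T \<subseteq> S" "T = (A \<union> Q \<union> Q\<inverse>)\<^sup>* `` {x}"
    and "\<And>a b. (a, b) \<in> Q \<Longrightarrow> a \<in> T \<Longrightarrow> \<phi> a = \<phi> b"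
  shows "card (\<phi> ` T) \<le> card S - card (S // A\<^sup>*) + 1"
proof -
  have "finite T"
    using assms(2,3) by (rule finite_subset[rotated])
  then have "card (\<phi> ` T) + card (T // A\<^sup>*) \<le> card T + 1"
    using card_image_add_card_quotient_le[OF assms(1,4)] assms(5) by blast
  moreover have "S // A\<^sup>* = T // A\<^sup>* \<union> (S - T) // A\<^sup>*"
    using assms(3) unfolding quotient_eq_image by blast
  then have "card (S // A\<^sup>*) \<le> card (T // A\<^sup>*) + card ((S - T) // A\<^sup>*)"
    by (simp add: card_Un_le)
  moreover have "card ((S - T) // A\<^sup>*) \<le> card (S - T)"
    unfolding quotient_eq_image using assms(2) by (simp add: card_image_le)
  moreover have "card (S - T) = card S - card T" "card T \<le> card S"
    using assms(2,3) by (auto simp: card_Diff_subset finite_subset card_mono)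
  ultimately show ?thesis
    by linarith
qed

section \<open>The Hasse diagram\<close>

lemma hasse_edges_subset: "hasse_edges S r \<subseteq> r \<union> r\<inverse>"
  by (auto simp: hasse_edges_def covers_def)

lemma sym_hasse_edges: "sym (hasse_edges S r)"
  by (auto simp: hasse_edges_def intro: symI)

lemma partial_order_subset_rtrancl_hasse_edges:
  assumes "finite S" "partial_order_on S r"
  shows "r \<subseteq> (hasse_edges S r)\<^sup>*"
proof -
  have rS: "r \<subseteq> S \<times> S" and "refl_on S r" "trans r" "antisym r"
    using assms(2) by (auto simp: partial_order_on_def preorder_on_def refl_on_def)
  define I where "I a b = {z \<in> S. (a, z) \<in> r \<and> (z, b) \<in> r}" for a b
  have "(x, y) \<in> (hasse_edges S r)\<^sup>*" if "(x, y) \<in> r" for x y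
    using that
  proof (induction "card (I x y)" arbitrary: x y rule: less_induct)
    case less
    show ?case
    proof (cases "x = y \<or> covers S r x y")
      case True
      then show ?thesis
        by (auto simp: hasse_edges_def)
    next
      case False
      then obtain z where z: "z \<in> S" "z \<noteq> x" "z \<noteq> y" "(x, z) \<in> r" "(z, y) \<in> r"
        using less.prems rS unfolding covers_def by blast
      have "y \<in> I x y - I x z" "x \<in> I x y - I z y"
        using z less.prems rS \<open>refl_on S r\<close> \<open>antisym r\<close> \<open>trans r\<close>
        by (auto simp: I_def dest: antisymD transD refl_onD)
      moreover have "I x z \<subseteq> I x y" "I z y \<subseteq> I x y"
        using z \<open>trans r\<close> by (auto simp: I_def dest: transD)
      moreover have "finite (I x y)"
        using assms(1) by (simp add: I_def)
      ultimately have "card (I x z) < card (I x y)" "card (I z y) < card (I x y)"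
        by (metis Diff_iff psubsetI psubset_card_mono)+
      then show ?thesis
        using less.hyps z by (meson rtrancl_trans)
    qed
  qed
  then show ?thesis
    by auto
qed

lemma rtrancl_constraints_eq_hasse:
  assumes "finite S" "partial_order_on S r"
  shows "(r \<union> r\<inverse> \<union> Q \<union> Q\<inverse>)\<^sup>* = (hasse_edges S r \<union> Q \<union> Q\<inverse>)\<^sup>*"
proof (rule rtrancl_subset)
  show "hasse_edges S r \<union> Q \<union> Q\<inverse> \<subseteq> r \<union> r\<inverse> \<union> Q \<union> Q\<inverse>"
    using hasse_edges_subset by blast
  have "r \<subseteq> (hasse_edges S r)\<^sup>*" "r\<inverse> \<subseteq> (hasse_edges S r)\<^sup>*"
    using partial_order_subset_rtrancl_hasse_edges[OF assms]
      sym_rtrancl[OF sym_hasse_edges, of S r] by (auto dest: symD)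
  then show "r \<union> r\<inverse> \<union> Q \<union> Q\<inverse> \<subseteq> (hasse_edges S r \<union> Q \<union> Q\<inverse>)\<^sup>*"
    using rtrancl_mono[of "hasse_edges S r" "hasse_edges S r \<union> Q \<union> Q\<inverse>"] by blast
qed

lemma card_image_constraint_component_le:
  assumes "finite S" "partial_order_on S r" "r \<subseteq> S \<times> S" "Q \<subseteq> S \<times> S" "x \<in> S"
    and "admissible r Q D (constraint_component r Q x) \<phi>"
  shows "card (\<phi> ` constraint_component r Q x) \<le> card S - hasse_components S r + 1"
proof -
  define T where "T = constraint_component r Q x"
  have T: "T = (hasse_edges S r \<union> Q \<union> Q\<inverse>)\<^sup>* `` {x}"
    by (simp add: T_def constraint_component_def rtrancl_constraints_eq_hasse[OF assms(1,2)])
  have "T \<subseteq> S"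
    unfolding T_def using assms(3,4,5) by (intro constraint_component_subset) auto
  moreover have "\<phi> a = \<phi> b" if "(a, b) \<in> Q" "a \<in> T" for a b
    using that assms(6) constraint_component_closed[of a r Q x b] by (auto simp: T_def admissible_def)
  ultimately have "card (\<phi> ` T) \<le> card S - card (S // (hasse_edges S r)\<^sup>*) + 1"
    using card_image_component_le[OF sym_hasse_edges assms(1) _ T] by blast
  then show ?thesis
    by (simp add: T_def hasse_components_def)
qed

lemma smooth_poly_fun_num_admissible:
  assumes "finite S" "partial_order_on S r" "r \<subseteq> S \<times> S" "Q \<subseteq> S \<times> S" "D \<subseteq> S \<times> S"
  shows "smooth_poly_fun (card S - hasse_components S r + 1) (num_admissible r Q D S)"
proof (rule smooth_poly_fun_num_admissible_delete_contract[OF assms(1,5,4)])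
  fix Q :: "('a \<times> 'a) set"
  assume "Q \<subseteq> S \<times> S"
  then show "smooth_poly_fun (card S - hasse_components S r + 1) (num_admissible r Q {} S)"
    using assms(1,3) card_image_constraint_component_le[OF assms(1,2,3)]
    by (intro smooth_poly_fun_num_admissible_if_components_bounded) auto
qed

theorem theorem1p1:
  fixes S :: "'a set" and r :: "('a \<times> 'a) set" and E :: "'a set set"
  assumes "finite S"
    and "r \<subseteq> S \<times> S"
    and "partial_order_on S r"
    and "\<forall>e\<in>E. \<exists>x y. x \<in> S \<and> y \<in> S \<and> x \<noteq> y \<and> e = {x, y}"
  shows "\<exists>f :: rat poly.
    (\<forall>n::nat. poly f (of_nat n) = of_nat (colorings S r E n)) \<and>
    (\<forall>i. \<forall>p::nat. prime p \<and> int p dvd snd (quotient_of (coeff f i))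
        \<longrightarrow> p \<le> card S - hasse_components S r + 1)"
proof -
  define D where "D = {(x, y). {x, y} \<in> E}"
  have "D \<subseteq> S \<times> S"
    using assms(4) by (auto simp: D_def doubleton_eq_iff)
  moreover have "colorings S r E = num_admissible r {} D S"
    using \<open>D \<subseteq> S \<times> S\<close> unfolding colorings_def num_admissible_def admissible_def D_def
    by (intro ext arg_cong[where f = card] Collect_cong) blast
  ultimately have "smooth_poly_fun (card S - hasse_components S r + 1) (colorings S r E)"
    using smooth_poly_fun_num_admissible[OF assms(1,3,2)] by simp
  then show ?thesis
    unfolding smooth_poly_fun_def smooth_poly_def using prime_dvd_denom_le by metis
qed

end
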